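(* Let $\mathbb{K}\in\{\mathbb{R},\mathbb{C}\}$, let $g\in\mathsf{GL}_d(\mathbb{K})$ and write $g=k_g\exp(\mu(g))k_g'$ with $k_g,k_g'\in\mathsf{K}_d$. Let $x\in\mathbb{P}(\mathbb{K}^d)$ and suppose $0<\delta,r<1$ satisfy $gB_\delta(x)\subset B_r(gx)$. Then \[\frac{\sigma_1}{\sigma_2}(g)\ge\frac{\delta}{4r}\,\mathrm{dist}\big(x,\mathbb{P}((k_g')^{-1}e_1^\perp)\big).\]
   Context: $\mathbb{K}^d$ has the standard (Hermitian) inner product and standard basis $e_1,\dots,e_d$; $\mathsf{K}_d$ is $\mathsf{O}(d)$ or $\mathsf{U}(d)$. $\sigma_1(g)\ge\dots\ge\sigma_d(g)$ are the singular values, $\mu(g)=\mathrm{diag}(\log\sigma_1(g),\dots,\log\sigma_d(g))$, so $g=k_g\exp(\mu(g))k_g'$ is a Cartan (KAK) decomposition. The metric on $\mathbb{P}(\mathbb{K}^d)$ is $d_{\mathbb{P}}([u],[v])=\sqrt{1-\frac{|\langle u,v\rangle|^2}{\|u\|^2\|v\|^2}}$, $B_\delta(x)$ is the open $d_{\mathbb{P}}$-ball, and for subsets $X,Y\subset\mathbb{P}(\mathbb{K}^d)$, $\mathrm{dist}(X,Y)$ is the minimal $d_{\mathbb{P}}$-distance between them. For a unit vector $v$, $v^\perp$ is its orthogonal complement. *)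

theory Defs
  imports "HOL-Analysis.Analysis" "Jordan_Normal_Form.Schur_Decomposition"
begin

(* K^d is modelled by 'a vec with carrier_vec d, for 'a = real or 'a = complex.
   The standard Hermitian inner product <u,v> is  u \<bullet>c v  (= sum u_i * conj v_i). *)

definition unitary_mat :: "nat \<Rightarrow> 'a::conjugatable_field mat \<Rightarrow> bool" where
  "unitary_mat d k \<longleftrightarrow> k \<in> carrier_mat d d \<and> mat_adjoint k * k = 1\<^sub>m d"

definition diag_real :: "nat \<Rightarrow> (nat \<Rightarrow> real) \<Rightarrow> 'a::real_normed_field mat" where
  "diag_real d s = mat d d (\<lambda>(i,j). if i = j then of_real (s i) else 0)"

definition dP :: "'a::{conjugatable_field, real_normed_field} vec \<Rightarrow> 'a vec \<Rightarrow> real" where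
  "dP u v = sqrt (1 - (norm (u \<bullet>c v))\<^sup>2 / (norm (u \<bullet>c u) * norm (v \<bullet>c v)))"

text \<open>Nonzero representatives of points of P(K^d).\<close>
definition proj_reps :: "nat \<Rightarrow> 'a::zero vec set" where
  "proj_reps d = {u. u \<in> carrier_vec d \<and> u \<noteq> 0\<^sub>v d}"

definition proj_ball :: "nat \<Rightarrow> 'a::{conjugatable_field, real_normed_field} vec \<Rightarrow> real \<Rightarrow> 'a vec set" where
  "proj_ball d x \<delta> = {y \<in> proj_reps d. dP x y < \<delta>}"

text \<open>Nonzero representatives of P((k')^{-1} e_1^perp), i.e. of the hyperplane
  {w. <k' w, e_1> = 0} (e_1 = unit_vec d 0).\<close>
definition hyperplane_reps :: "nat \<Rightarrow> 'a::{conjugatable_field, real_normed_field} mat \<Rightarrow> 'a vec set" where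
  "hyperplane_reps d k' = {w \<in> proj_reps d. (k' *\<^sub>v w) \<bullet>c unit_vec d 0 = 0}"

definition dist_to_set :: "'a::{conjugatable_field, real_normed_field} vec \<Rightarrow> 'a vec set \<Rightarrow> real" where
  "dist_to_set x W = Inf (dP x ` W)"

end

theory Submission
  imports Defs
begin

text \<open>
  Conjugating by the unitary factors, \<open>g\<close> becomes \<open>D = diag(\<sigma>)\<close>, the point becomes
  \<open>X = k' x\<close>, \<open>d\<^sub>P\<close> is unchanged, and the hyperplane becomes \<open>{X\<^sub>0 = 0}\<close>, at distance
  at most \<open>|X\<^sub>0|/|X|\<close> from \<open>[X]\<close>. Write \<open>d\<^sub>P(u,v)\<^sup>2 = G(u,v)/(|u|\<^sup>2|v|\<^sup>2)\<close> with the Gram determinant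
  \<open>G(u,v) = |u|\<^sup>2|v|\<^sup>2 - |\<langle>u,v\<rangle>|\<^sup>2\<close>, which does not change when a multiple of \<open>u\<close> is added to \<open>v\<close>.
  The perturbation \<open>Y = X + c e\<^sub>1\<close> with \<open>c = \<delta>|X|/2\<close> satisfies \<open>d\<^sub>P(X,Y) < \<delta>\<close>, so
  \<open>d\<^sub>P(DX,DY) < r\<close>. But \<open>DY = DX + \<sigma>\<^sub>1 c e\<^sub>1\<close>, hence \<open>G(DX,DY) = \<sigma>\<^sub>1\<^sup>2c\<^sup>2(|DX|\<^sup>2 - |(DX)\<^sub>1|\<^sup>2) \<ge> \<sigma>\<^sub>1\<^sup>2c\<^sup>2\<sigma>\<^sub>0\<^sup>2|X\<^sub>0|\<^sup>2\<close>,
  while \<open>|DX|\<^sup>2|DY|\<^sup>2 \<le> \<sigma>\<^sub>0\<^sup>4|X|\<^sup>2(2|X|\<^sup>2 + 2c\<^sup>2)\<close>; comparing the two bounds gives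
  \<open>\<sigma>\<^sub>0/\<sigma>\<^sub>1 \<ge> \<delta>/(4r) \<cdot> |X\<^sub>0|/|X|\<close>.
\<close>

text \<open>The class covers both scalar fields \<open>\<real>\<close> and \<open>\<complex>\<close>. Inside a class specification
  \<open>of_real\<close> is not yet available, hence \<open>x *\<^sub>R 1\<close>.\<close>
class normed_conjugatable_field = conjugatable_field + real_normed_field +
  assumes mult_conjugate_self_scaleR: "z * conjugate z = (norm z)\<^sup>2 *\<^sub>R 1"
    and conjugate_scaleR_one: "conjugate (x *\<^sub>R 1) = x *\<^sub>R 1"

instance real :: normed_conjugatable_field
  by standard (simp_all add: power2_eq_square)

instance complex :: normed_conjugatable_field
proof
  fix z :: complex and x :: real
  show "z * conjugate z = (norm z)\<^sup>2 *\<^sub>R 1"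
    unfolding scaleR_conv_of_real mult.right_neutral conjugate_complex_def
    by (rule complex_norm_square[symmetric])
  show "conjugate (x *\<^sub>R (1::complex)) = x *\<^sub>R 1" by (simp add: scaleR_conv_of_real)
qed

lemma mult_conjugate_self: "(z::'a::normed_conjugatable_field) * conjugate z = of_real ((norm z)\<^sup>2)"
  by (simp add: mult_conjugate_self_scaleR of_real_def)

lemma conjugate_of_real: "conjugate (of_real x :: 'a::normed_conjugatable_field) = of_real x"
  by (simp add: conjugate_scaleR_one of_real_def)

lemma conjugate_one: "conjugate (1::'a::normed_conjugatable_field) = 1"
  using conjugate_of_real[of 1] by simp

lemma norm_conjugate: "norm (conjugate (z::'a::normed_conjugatable_field)) = norm z"
proof -
  have "of_real ((norm (conjugate z))\<^sup>2) = (of_real ((norm z)\<^sup>2) :: 'a)"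
    by (metis mult_conjugate_self conjugate_id mult.commute)
  then have "(norm (conjugate z))\<^sup>2 = (norm z)\<^sup>2" by (simp only: of_real_eq_iff)
  then show ?thesis by (simp add: power2_eq_iff_nonneg)
qed

definition vec_sq_norm :: "'a::real_normed_field vec \<Rightarrow> real" where
  "vec_sq_norm v = (\<Sum>i<dim_vec v. (norm (v $ i))\<^sup>2)"

lemma vec_sq_norm_nonneg: "0 \<le> vec_sq_norm v"
  unfolding vec_sq_norm_def by (simp add: sum_nonneg)

lemma vec_sq_norm_carrier: "v \<in> carrier_vec d \<Longrightarrow> vec_sq_norm v = (\<Sum>i<d. (norm (v $ i))\<^sup>2)"
  unfolding vec_sq_norm_def by simp

lemma vec_sq_norm_eq_0_iff:
  assumes "v \<in> carrier_vec d"
  shows "vec_sq_norm v = 0 \<longleftrightarrow> v = 0\<^sub>v d"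
proof
  assume "vec_sq_norm v = 0"
  then have "\<forall>i<d. v $ i = 0"
    using assms by (simp add: vec_sq_norm_carrier sum_nonneg_eq_0_iff)
  then show "v = 0\<^sub>v d" using assms by (intro eq_vecI) auto
qed (simp add: vec_sq_norm_def)

lemma vec_sq_norm_pos_iff:
  assumes "v \<in> carrier_vec d"
  shows "0 < vec_sq_norm v \<longleftrightarrow> v \<noteq> 0\<^sub>v d"
  unfolding less_le using vec_sq_norm_eq_0_iff[OF assms] vec_sq_norm_nonneg[of v] by auto

lemma vec_sq_norm_smult_unit_vec:
  assumes "i < d"
  shows "vec_sq_norm (a \<cdot>\<^sub>v unit_vec d i) = (norm a)\<^sup>2"
proof -
  have "vec_sq_norm (a \<cdot>\<^sub>v unit_vec d i) = (\<Sum>j<d. (norm ((a \<cdot>\<^sub>v unit_vec d i) $ j))\<^sup>2)"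
    by (simp add: vec_sq_norm_def)
  also have "\<dots> = (\<Sum>j<d. if j = i then (norm a)\<^sup>2 else 0)"
    by (rule sum.cong) (use assms in auto)
  finally show ?thesis using assms by simp
qed

lemma norm_sq_add_le: "(norm (x + y))\<^sup>2 \<le> 2 * (norm x)\<^sup>2 + 2 * (norm (y::'a::real_normed_vector))\<^sup>2"
proof -
  have "(norm (x + y))\<^sup>2 \<le> (norm x + norm y)\<^sup>2"
    by (intro power_mono norm_triangle_ineq) simp
  also have "\<dots> \<le> 2 * (norm x)\<^sup>2 + 2 * (norm y)\<^sup>2"
    unfolding power2_sum using sum_squares_bound[of "norm x" "norm y"] by linarith
  finally show ?thesis .
qed

lemma vec_sq_norm_add_le:
  assumes "v \<in> carrier_vec d" "w \<in> carrier_vec d"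
  shows "vec_sq_norm (v + w) \<le> 2 * vec_sq_norm v + 2 * vec_sq_norm w"
proof -
  have "vec_sq_norm (v + w) = (\<Sum>i<d. (norm (v $ i + w $ i))\<^sup>2)"
    using assms by (simp add: vec_sq_norm_carrier[of _ d])
  also have "\<dots> \<le> (\<Sum>i<d. 2 * (norm (v $ i))\<^sup>2 + 2 * (norm (w $ i))\<^sup>2)"
    by (intro sum_mono norm_sq_add_le)
  also have "\<dots> = 2 * vec_sq_norm v + 2 * vec_sq_norm w"
    using assms by (simp add: vec_sq_norm_carrier[of _ d] sum.distrib sum_distrib_left)
  finally show ?thesis .
qed

lemma vec_sq_norm_add_ge:
  assumes "v \<in> carrier_vec d" "w \<in> carrier_vec d"
  shows "vec_sq_norm v / 2 - vec_sq_norm w \<le> vec_sq_norm (v + w)"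
proof -
  have "vec_sq_norm v / 2 - vec_sq_norm w = (\<Sum>i<d. (norm (v $ i))\<^sup>2 / 2 - (norm (w $ i))\<^sup>2)"
    using assms by (simp add: vec_sq_norm_carrier[of _ d] sum_divide_distrib sum_subtractf)
  also have "\<dots> \<le> (\<Sum>i<d. (norm (v $ i + w $ i))\<^sup>2)"
  proof (intro sum_mono)
    fix i
    show "(norm (v $ i))\<^sup>2 / 2 - (norm (w $ i))\<^sup>2 \<le> (norm (v $ i + w $ i))\<^sup>2"
      using norm_sq_add_le[of "v $ i + w $ i" "- w $ i"] by simp
  qed
  also have "\<dots> = vec_sq_norm (v + w)"
    using assms by (simp add: vec_sq_norm_carrier[of _ d])
  finally show ?thesis .
qed

lemma cscalar_prod_sum:
  "u \<in> carrier_vec d \<Longrightarrow> v \<in> carrier_vec d \<Longrightarrow> u \<bullet>c v = (\<Sum>i<d. u $ i * conjugate (v $ i))"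
  by (auto simp: scalar_prod_def lessThan_atLeast0)

lemma cscalar_prod_self: "(v::'a::normed_conjugatable_field vec) \<bullet>c v = of_real (vec_sq_norm v)"
  by (simp add: scalar_prod_def vec_sq_norm_def lessThan_atLeast0 mult_conjugate_self)

lemma conjugate_cscalar_prod:
  "u \<in> carrier_vec d \<Longrightarrow> v \<in> carrier_vec d \<Longrightarrow> conjugate (u \<bullet>c v) = v \<bullet>c (u::'a::conjugatable_field vec)"
  by (auto simp: cscalar_prod_sum sum_conjugate conjugate_dist_mul mult.commute intro!: sum.cong)

lemma cscalar_prod_add_smult_right:
  "u \<in> carrier_vec d \<Longrightarrow> v \<in> carrier_vec d \<Longrightarrow> w \<in> carrier_vec d \<Longrightarrow>
    u \<bullet>c (w + a \<cdot>\<^sub>v v) = u \<bullet>c w + conjugate a * (u \<bullet>c (v::'a::conjugatable_field vec))"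
  by (simp add: conjugate_add_vec[of _ d] conjugate_smult_vec scalar_prod_add_distrib[of _ d])

lemma cscalar_prod_add_smult_left:
  "u \<in> carrier_vec d \<Longrightarrow> v \<in> carrier_vec d \<Longrightarrow> w \<in> carrier_vec d \<Longrightarrow>
    (w + a \<cdot>\<^sub>v u) \<bullet>c v = w \<bullet>c v + a * (u \<bullet>c (v::'a::conjugatable_field vec))"
  by (simp add: add_scalar_prod_distrib[of _ d])

lemma norm_cscalar_prod_self: "norm ((v::'a::normed_conjugatable_field vec) \<bullet>c v) = vec_sq_norm v"
  by (simp add: cscalar_prod_self vec_sq_norm_nonneg)

lemma conjugate_unit_vec: "conjugate (unit_vec d i) = (unit_vec d i :: 'a::normed_conjugatable_field vec)"
  by (rule eq_vecI) (simp_all add: unit_vec_def conjugate_one)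

lemma cscalar_prod_smult_unit_vec:
  "u \<in> carrier_vec d \<Longrightarrow> i < d \<Longrightarrow>
    u \<bullet>c (a \<cdot>\<^sub>v unit_vec d i) = u $ i * conjugate (a::'a::normed_conjugatable_field)"
  by (simp add: conjugate_smult_vec conjugate_unit_vec)

definition gram_det :: "'a::normed_conjugatable_field vec \<Rightarrow> 'a vec \<Rightarrow> real" where
  "gram_det u v = vec_sq_norm u * vec_sq_norm v - (norm (u \<bullet>c v))\<^sup>2"

lemma of_real_gram_det:
  assumes "u \<in> carrier_vec d" "v \<in> carrier_vec d"
  shows "of_real (gram_det u v) = (u \<bullet>c u) * (v \<bullet>c v) - (u \<bullet>c v) * (v \<bullet>c u)"
  using assms by (simp add: gram_det_def cscalar_prod_self mult_conjugate_self[symmetric]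
      conjugate_cscalar_prod del: of_real_power)

lemma gram_det_sym:
  assumes "u \<in> carrier_vec d" "v \<in> carrier_vec d"
  shows "gram_det u v = gram_det v u"
  using conjugate_cscalar_prod[OF assms(2,1)] by (metis gram_det_def norm_conjugate mult.commute)

lemma gram_det_add_smult:
  assumes u: "u \<in> carrier_vec d" and w: "w \<in> carrier_vec d"
  shows "gram_det u (w + a \<cdot>\<^sub>v u) = gram_det u w"
proof -
  have wa: "w + a \<cdot>\<^sub>v u \<in> carrier_vec d" using u w by simp
  have "(of_real (gram_det u (w + a \<cdot>\<^sub>v u)) :: 'a) = of_real (gram_det u w)"
    unfolding of_real_gram_det[OF u wa] of_real_gram_det[OF u w] using u w
    by (simp add: cscalar_prod_add_smult_left[of _ d] cscalar_prod_add_smult_right[of _ d])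
      (simp add: algebra_simps)
  then show ?thesis by simp
qed

lemma gram_det_add:
  assumes "u \<in> carrier_vec d" "w \<in> carrier_vec d"
  shows "gram_det u (u + w) = gram_det u w"
proof -
  have "u + w = w + 1 \<cdot>\<^sub>v u" using assms by auto
  then show ?thesis using gram_det_add_smult[OF assms] by (simp only:)
qed

lemma gram_det_smult_unit_vec:
  assumes "u \<in> carrier_vec d" "i < d"
  shows "gram_det u (a \<cdot>\<^sub>v unit_vec d i) = (norm a)\<^sup>2 * (vec_sq_norm u - (norm (u $ i))\<^sup>2)"
  using assms by (simp add: gram_det_def vec_sq_norm_smult_unit_vec cscalar_prod_smult_unit_vec
      norm_mult norm_conjugate power_mult_distrib algebra_simps)

lemma gram_det_nonneg:
  assumes u: "u \<in> carrier_vec d" and v: "v \<in> carrier_vec d"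
  shows "0 \<le> gram_det u v"
proof (cases "u = 0\<^sub>v d")
  case True
  then show ?thesis using v by (simp add: gram_det_def vec_sq_norm_def)
next
  case False
  then have P: "0 < vec_sq_norm u" using vec_sq_norm_pos_iff[OF u] by simp
  \<comment> \<open>shift \<open>v\<close> along \<open>u\<close> to make it orthogonal to \<open>u\<close>\<close>
  define a where "a = conjugate (- (u \<bullet>c v) / of_real (vec_sq_norm u))"
  have "u \<bullet>c (v + a \<cdot>\<^sub>v u) = 0"
    using u v P by (simp add: cscalar_prod_add_smult_right[of _ d] a_def cscalar_prod_self)
  then have "gram_det u (v + a \<cdot>\<^sub>v u) = vec_sq_norm u * vec_sq_norm (v + a \<cdot>\<^sub>v u)"
    by (simp add: gram_det_def)
  then show ?thesis
    using gram_det_add_smult[OF u v] P by (simp add: vec_sq_norm_nonneg)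
qed

lemma dP_eq_gram_det:
  fixes u v :: "'a::normed_conjugatable_field vec"
  assumes "u \<in> carrier_vec d" "v \<in> carrier_vec d" "u \<noteq> 0\<^sub>v d" "v \<noteq> 0\<^sub>v d"
  shows "dP u v = sqrt (gram_det u v / (vec_sq_norm u * vec_sq_norm v))"
proof -
  have "0 < vec_sq_norm u" "0 < vec_sq_norm v"
    using assms vec_sq_norm_pos_iff[OF assms(1)] vec_sq_norm_pos_iff[OF assms(2)] by simp_all
  then show ?thesis by (simp add: dP_def gram_det_def norm_cscalar_prod_self diff_divide_distrib)
qed

lemma dP_nonneg:
  fixes u v :: "'a::normed_conjugatable_field vec"
  assumes "u \<in> carrier_vec d" "v \<in> carrier_vec d" "u \<noteq> 0\<^sub>v d" "v \<noteq> 0\<^sub>v d"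
  shows "0 \<le> dP u v"
  using gram_det_nonneg[OF assms(1,2)]
  by (simp add: dP_eq_gram_det[OF assms] vec_sq_norm_nonneg)

lemma dP_le_1: "dP u v \<le> 1"
  unfolding dP_def by simp

lemma mat_adjoint_carrier: "k \<in> carrier_mat n m \<Longrightarrow> mat_adjoint k \<in> carrier_mat m n"
  unfolding mat_adjoint_def by (auto intro!: mat_of_rows_carrier)

lemma mat_adjoint_index:
  "k \<in> carrier_mat n m \<Longrightarrow> i < m \<Longrightarrow> j < n \<Longrightarrow> mat_adjoint k $$ (i, j) = conjugate (k $$ (j, i))"
  unfolding mat_adjoint_def by (simp add: mat_of_rows_index)

lemma mult_mat_vec_index_sum:
  "k \<in> carrier_mat n m \<Longrightarrow> u \<in> carrier_vec m \<Longrightarrow> i < n \<Longrightarrow> (k *\<^sub>v u) $ i = (\<Sum>j<m. k $$ (i, j) * u $ j)"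
  by (auto simp: scalar_prod_def lessThan_atLeast0 intro!: sum.cong)

lemma cscalar_prod_mat_adjoint:
  fixes k :: "'a::conjugatable_field mat"
  assumes k: "k \<in> carrier_mat n m" and u: "u \<in> carrier_vec m" and w: "w \<in> carrier_vec n"
  shows "(k *\<^sub>v u) \<bullet>c w = u \<bullet>c (mat_adjoint k *\<^sub>v w)"
proof -
  have "(k *\<^sub>v u) \<bullet>c w = (\<Sum>i<n. \<Sum>j<m. k $$ (i, j) * u $ j * conjugate (w $ i))"
    using k u w
    by (simp add: cscalar_prod_sum[of _ n] mult_mat_vec_index_sum sum_distrib_right del: index_mult_mat_vec)
  also have "\<dots> = (\<Sum>j<m. \<Sum>i<n. k $$ (i, j) * u $ j * conjugate (w $ i))"
    by (rule sum.swap)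
  also have "\<dots> = u \<bullet>c (mat_adjoint k *\<^sub>v w)"
    using k u w mat_adjoint_carrier[OF k]
    by (simp add: cscalar_prod_sum[of _ m] mult_mat_vec_index_sum[of _ m n] mat_adjoint_index
        sum_distrib_left sum_conjugate conjugate_dist_mul mult_ac del: index_mult_mat_vec)
  finally show ?thesis .
qed

lemma unitary_mat_cscalar_prod:
  assumes k: "unitary_mat d k" and u: "u \<in> carrier_vec d" and v: "v \<in> carrier_vec d"
  shows "(k *\<^sub>v u) \<bullet>c (k *\<^sub>v v) = u \<bullet>c v"
proof -
  have kc: "k \<in> carrier_mat d d" and kk: "mat_adjoint k * k = 1\<^sub>m d"
    using k unfolding unitary_mat_def by auto
  have "(k *\<^sub>v u) \<bullet>c (k *\<^sub>v v) = u \<bullet>c (mat_adjoint k *\<^sub>v (k *\<^sub>v v))"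
    using kc u v by (simp add: cscalar_prod_mat_adjoint)
  also have "\<dots> = u \<bullet>c ((mat_adjoint k * k) *\<^sub>v v)"
    using kc v mat_adjoint_carrier[OF kc] by simp
  finally show ?thesis using kk v by simp
qed

lemma unitary_mat_vec_sq_norm:
  fixes k :: "'a::normed_conjugatable_field mat"
  shows "unitary_mat d k \<Longrightarrow> u \<in> carrier_vec d \<Longrightarrow> vec_sq_norm (k *\<^sub>v u) = vec_sq_norm u"
  using unitary_mat_cscalar_prod[of d k u u] by (simp add: cscalar_prod_self)

lemma unitary_mat_dP:
  fixes k :: "'a::normed_conjugatable_field mat"
  shows "unitary_mat d k \<Longrightarrow> u \<in> carrier_vec d \<Longrightarrow> v \<in> carrier_vec d \<Longrightarrow> dP (k *\<^sub>v u) (k *\<^sub>v v) = dP u v"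
  by (simp add: dP_def unitary_mat_cscalar_prod)

lemma unitary_mat_proj_reps:
  fixes k :: "'a::normed_conjugatable_field mat"
  shows "unitary_mat d k \<Longrightarrow> u \<in> proj_reps d \<Longrightarrow> k *\<^sub>v u \<in> proj_reps d"
  using unitary_mat_vec_sq_norm[of d k u] vec_sq_norm_pos_iff[of u d] vec_sq_norm_pos_iff[of "k *\<^sub>v u" d]
  by (auto simp: proj_reps_def unitary_mat_def)

lemma unitary_mat_surj_proj_reps:
  fixes k :: "'a::normed_conjugatable_field mat"
  assumes k: "unitary_mat d k" and v: "v \<in> proj_reps d"
  obtains u where "u \<in> proj_reps d" "k *\<^sub>v u = v"
proof
  have kc: "k \<in> carrier_mat d d" and kk: "mat_adjoint k * k = 1\<^sub>m d"
    using k unfolding unitary_mat_def by auto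
  have vc: "v \<in> carrier_vec d" "v \<noteq> 0\<^sub>v d" using v by (simp_all add: proj_reps_def)
  have u: "mat_adjoint k *\<^sub>v v \<in> carrier_vec d"
    using mat_adjoint_carrier[OF kc] vc(1) by (rule mult_mat_vec_carrier)
  have "k *\<^sub>v (mat_adjoint k *\<^sub>v v) = (k * mat_adjoint k) *\<^sub>v v"
    by (rule assoc_mult_mat_vec[symmetric, OF kc mat_adjoint_carrier[OF kc] vc(1)])
  also have "k * mat_adjoint k = 1\<^sub>m d"
    by (rule mat_mult_left_right_inverse[OF mat_adjoint_carrier[OF kc] kc kk])
  finally show kv: "k *\<^sub>v (mat_adjoint k *\<^sub>v v) = v" using vc(1) by simp
  show "mat_adjoint k *\<^sub>v v \<in> proj_reps d"
    using unitary_mat_vec_sq_norm[OF k u] kv u vc vec_sq_norm_pos_iff[OF u] vec_sq_norm_pos_iff[OF vc(1)]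
    by (simp add: proj_reps_def)
qed

lemma diag_real_carrier: "diag_real d \<sigma> \<in> carrier_mat d d"
  unfolding diag_real_def by simp

lemma diag_real_mult_vec_index:
  assumes "v \<in> carrier_vec d" "i < d"
  shows "(diag_real d \<sigma> *\<^sub>v v) $ i = of_real (\<sigma> i) * v $ i"
proof -
  have "(diag_real d \<sigma> *\<^sub>v v) $ i = (\<Sum>j<d. diag_real d \<sigma> $$ (i, j) * v $ j)"
    using assms by (rule mult_mat_vec_index_sum[OF diag_real_carrier])
  also have "\<dots> = (\<Sum>j<d. if j = i then of_real (\<sigma> i) * v $ i else 0)"
    using assms by (intro sum.cong) (auto simp: diag_real_def)
  also have "\<dots> = of_real (\<sigma> i) * v $ i" using assms by simp
  finally show ?thesis .
qed

lemma diag_real_mult_smult_unit_vec: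
  "i < d \<Longrightarrow> diag_real d \<sigma> *\<^sub>v (a \<cdot>\<^sub>v unit_vec d i) = (of_real (\<sigma> i) * a) \<cdot>\<^sub>v unit_vec d i"
  by (rule eq_vecI)
    (auto simp: diag_real_mult_vec_index diag_real_carrier[THEN carrier_matD(1)] simp del: index_mult_mat_vec)

lemma vec_sq_norm_diag_real_le:
  assumes v: "v \<in> carrier_vec d" and bound: "\<forall>i<d. \<bar>\<sigma> i\<bar> \<le> s"
  shows "vec_sq_norm (diag_real d \<sigma> *\<^sub>v v) \<le> s\<^sup>2 * vec_sq_norm v"
proof -
  have "vec_sq_norm (diag_real d \<sigma> *\<^sub>v v) = (\<Sum>i<d. (norm ((diag_real d \<sigma> *\<^sub>v v) $ i))\<^sup>2)"
    by (rule vec_sq_norm_carrier[OF mult_mat_vec_carrier[OF diag_real_carrier v]])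
  also have "\<dots> = (\<Sum>i<d. (\<sigma> i)\<^sup>2 * (norm (v $ i))\<^sup>2)"
    using v by (intro sum.cong) (simp_all add: diag_real_mult_vec_index norm_mult power_mult_distrib)
  also have "\<dots> \<le> (\<Sum>i<d. s\<^sup>2 * (norm (v $ i))\<^sup>2)"
    using bound power_mono[of "\<bar>\<sigma> i\<bar>" s 2 for i] by (intro sum_mono mult_right_mono) auto
  also have "\<dots> = s\<^sup>2 * vec_sq_norm v"
    using v by (simp add: vec_sq_norm_carrier[of _ d] sum_distrib_left)
  finally show ?thesis .
qed

lemma vec_sq_norm_ge_two_coords:
  "v \<in> carrier_vec d \<Longrightarrow> i < d \<Longrightarrow> j < d \<Longrightarrow> i \<noteq> j \<Longrightarrow>
    (norm (v $ i))\<^sup>2 + (norm (v $ j))\<^sup>2 \<le> vec_sq_norm v"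
  using sum_mono2[of "{..<d}" "{i, j}" "\<lambda>i. (norm (v $ i))\<^sup>2"]
  by (simp add: vec_sq_norm_carrier[of _ d])

lemma dP_perturbation_lt:
  fixes X :: "'a::normed_conjugatable_field vec"
  assumes X: "X \<in> carrier_vec d" "X \<noteq> 0\<^sub>v d" and i: "i < d" and \<delta>: "0 < \<delta>" "\<delta> < 1"
  defines "Y \<equiv> X + of_real (\<delta> / 2 * sqrt (vec_sq_norm X)) \<cdot>\<^sub>v unit_vec d i"
  shows "Y \<in> proj_reps d \<and> dP X Y < \<delta>"
proof -
  define P where "P = vec_sq_norm X"
  define c where "c = \<delta> / 2 * sqrt P"
  define w :: "'a vec" where "w = of_real c \<cdot>\<^sub>v unit_vec d i"
  have P: "0 < P" using vec_sq_norm_pos_iff[OF X(1)] X(2) by (simp add: P_def)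
  have w: "w \<in> carrier_vec d" and Y: "Y = X + w" and Yc: "Y \<in> carrier_vec d"
    using X by (simp_all add: w_def Y_def c_def P_def)
  have c2: "c\<^sup>2 = \<delta>\<^sup>2 / 4 * P" using P by (simp add: c_def power_mult_distrib power_divide)
  have \<delta>2: "\<delta>\<^sup>2 < 1" using \<delta> by (simp add: power_less_one_iff)
  have "vec_sq_norm w = c\<^sup>2" using i by (simp add: w_def vec_sq_norm_smult_unit_vec)
  then have "P / 2 - c\<^sup>2 \<le> vec_sq_norm Y"
    using vec_sq_norm_add_ge[OF X(1) w] by (simp add: Y P_def)
  then have "P * (1/2 - \<delta>\<^sup>2 / 4) \<le> vec_sq_norm Y" by (simp add: c2 algebra_simps)
  moreover have "0 < P * (1/2 - \<delta>\<^sup>2 / 4)" using P \<delta>2 by simp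
  ultimately have nY: "0 < vec_sq_norm Y" by linarith
  then have Y0: "Y \<noteq> 0\<^sub>v d" using vec_sq_norm_pos_iff[OF Yc] by simp
  have "gram_det X Y = gram_det X w" unfolding Y by (rule gram_det_add[OF X(1) w])
  also have "\<dots> = c\<^sup>2 * (P - (norm (X $ i))\<^sup>2)"
    using X(1) i by (simp add: w_def gram_det_smult_unit_vec P_def)
  finally have G: "gram_det X Y \<le> c\<^sup>2 * P" by (simp add: right_diff_distrib)
  have "gram_det X Y / (P * vec_sq_norm Y) \<le> c\<^sup>2 * P / (P * (P * (1/2 - \<delta>\<^sup>2 / 4)))"
    using G P nY \<open>P * (1/2 - \<delta>\<^sup>2 / 4) \<le> vec_sq_norm Y\<close> \<delta>2
    by (intro frac_le mult_left_mono mult_pos_pos) auto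
  also have "\<dots> = \<delta>\<^sup>2 / (2 - \<delta>\<^sup>2)" using P \<delta>2 by (simp add: c2 field_simps)
  also have "\<dots> < \<delta>\<^sup>2"
  proof -
    have "\<delta>\<^sup>2 * 1 < \<delta>\<^sup>2 * (2 - \<delta>\<^sup>2)" using \<delta> \<delta>2 by (intro mult_strict_left_mono) auto
    then show ?thesis using \<delta>2 by (simp add: divide_less_eq)
  qed
  finally have "sqrt (gram_det X Y / (P * vec_sq_norm Y)) < sqrt (\<delta>\<^sup>2)" by (rule real_sqrt_less_mono)
  then have "dP X Y < \<delta>" using \<delta> by (simp add: dP_eq_gram_det[OF X(1) Yc X(2) Y0] P_def)
  then show ?thesis using Yc Y0 by (simp add: proj_reps_def)
qed

lemma gram_det_diag_real_perturbation_ge: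
  fixes X :: "'a::normed_conjugatable_field vec" and \<sigma> :: "nat \<Rightarrow> real" and c :: real
  assumes d: "2 \<le> d" and X: "X \<in> carrier_vec d"
  defines "D \<equiv> diag_real d \<sigma> :: 'a mat"
  shows "(\<sigma> 1 * c)\<^sup>2 * ((\<sigma> 0)\<^sup>2 * (norm (X $ 0))\<^sup>2)
    \<le> gram_det (D *\<^sub>v X) (D *\<^sub>v (X + of_real c \<cdot>\<^sub>v unit_vec d 1))"
proof -
  define U where "U = D *\<^sub>v X"
  have Dc: "D \<in> carrier_mat d d" unfolding D_def by (rule diag_real_carrier)
  have Uc: "U \<in> carrier_vec d" using Dc X by (simp add: U_def)
  have "D *\<^sub>v (X + of_real c \<cdot>\<^sub>v unit_vec d 1) = U + of_real (\<sigma> 1 * c) \<cdot>\<^sub>v unit_vec d 1"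
    using Dc X d by (simp add: U_def D_def mult_add_distrib_mat_vec[of _ d d] diag_real_mult_smult_unit_vec)
  then have "gram_det U (D *\<^sub>v (X + of_real c \<cdot>\<^sub>v unit_vec d 1))
      = (\<sigma> 1 * c)\<^sup>2 * (vec_sq_norm U - (norm (U $ 1))\<^sup>2)"
    using Uc d by (simp add: gram_det_add gram_det_smult_unit_vec norm_mult power_mult_distrib)
  moreover have "U $ 0 = of_real (\<sigma> 0) * X $ 0"
    using X d by (simp add: U_def D_def diag_real_mult_vec_index del: index_mult_mat_vec)
  then have "(\<sigma> 0)\<^sup>2 * (norm (X $ 0))\<^sup>2 \<le> vec_sq_norm U - (norm (U $ 1))\<^sup>2"
    using vec_sq_norm_ge_two_coords[OF Uc, of 0 1] d by (simp add: norm_mult power_mult_distrib)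
  ultimately show ?thesis by (simp add: U_def mult_left_mono)
qed

lemma dP_diag_real_perturbation_ge:
  fixes X :: "'a::normed_conjugatable_field vec"
  assumes d: "2 \<le> d" and X: "X \<in> carrier_vec d" and X0: "X $ 0 \<noteq> 0" and c: "0 < c"
    and pos: "\<forall>i<d. 0 < \<sigma> i" and mono: "\<forall>i j. i \<le> j \<longrightarrow> j < d \<longrightarrow> \<sigma> j \<le> \<sigma> i"
  defines "D \<equiv> diag_real d \<sigma> :: 'a mat" and "Y \<equiv> X + of_real c \<cdot>\<^sub>v unit_vec d 1"
  shows "sqrt ((\<sigma> 1 * c)\<^sup>2 * (norm (X $ 0))\<^sup>2
            / ((\<sigma> 0)\<^sup>2 * vec_sq_norm X * (2 * vec_sq_norm X + 2 * c\<^sup>2)))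
         \<le> dP (D *\<^sub>v X) (D *\<^sub>v Y)"
proof -
  define U V P where "U = D *\<^sub>v X" and "V = D *\<^sub>v Y" and "P = vec_sq_norm X"
  have s0: "0 < \<sigma> 0" and s1: "0 < \<sigma> 1" using pos d by auto
  have bound: "\<forall>i<d. \<bar>\<sigma> i\<bar> \<le> \<sigma> 0" using pos mono by auto
  have Dc: "D \<in> carrier_mat d d" unfolding D_def by (rule diag_real_carrier)
  have Yc: "Y \<in> carrier_vec d" using X by (simp add: Y_def)
  have Uc: "U \<in> carrier_vec d" and Vc: "V \<in> carrier_vec d"
    using Dc X Yc by (simp_all add: U_def V_def)
  have lower: "(\<sigma> 1 * c)\<^sup>2 * ((\<sigma> 0)\<^sup>2 * (norm (X $ 0))\<^sup>2) \<le> gram_det U V"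
    using gram_det_diag_real_perturbation_ge[OF d X] by (simp add: U_def V_def D_def Y_def)
  have nU: "vec_sq_norm U \<le> (\<sigma> 0)\<^sup>2 * P"
    using vec_sq_norm_diag_real_le[OF X bound] by (simp add: U_def D_def P_def)
  have nY: "vec_sq_norm Y \<le> 2 * P + 2 * c\<^sup>2"
    using vec_sq_norm_add_le[OF X, of "of_real c \<cdot>\<^sub>v unit_vec d 1"] d
    by (simp add: Y_def P_def vec_sq_norm_smult_unit_vec)
  have "vec_sq_norm V \<le> (\<sigma> 0)\<^sup>2 * vec_sq_norm Y"
    using vec_sq_norm_diag_real_le[OF Yc bound] by (simp add: V_def D_def)
  also have "\<dots> \<le> (\<sigma> 0)\<^sup>2 * (2 * P + 2 * c\<^sup>2)" using nY by (rule mult_left_mono) simp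
  finally have nV: "vec_sq_norm V \<le> (\<sigma> 0)\<^sup>2 * (2 * P + 2 * c\<^sup>2)" .
  have upper: "vec_sq_norm U * vec_sq_norm V \<le> (\<sigma> 0)\<^sup>2 * P * ((\<sigma> 0)\<^sup>2 * (2 * P + 2 * c\<^sup>2))"
    using nU nV by (intro mult_mono) (auto simp: vec_sq_norm_nonneg P_def)
  have lower_pos: "0 < (\<sigma> 1 * c)\<^sup>2 * ((\<sigma> 0)\<^sup>2 * (norm (X $ 0))\<^sup>2)"
    using s0 s1 c X0 by simp
  have "gram_det U V \<le> vec_sq_norm U * vec_sq_norm V" by (simp add: gram_det_def)
  then have "0 < vec_sq_norm U * vec_sq_norm V" using lower lower_pos by linarith
  then have "0 < vec_sq_norm U" "0 < vec_sq_norm V"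
    using vec_sq_norm_nonneg[of U] vec_sq_norm_nonneg[of V] by (auto simp: zero_less_mult_iff)
  then have UV0: "U \<noteq> 0\<^sub>v d" "V \<noteq> 0\<^sub>v d"
    using vec_sq_norm_pos_iff[OF Uc] vec_sq_norm_pos_iff[OF Vc] by auto
  have "(\<sigma> 1 * c)\<^sup>2 * (norm (X $ 0))\<^sup>2 / ((\<sigma> 0)\<^sup>2 * P * (2 * P + 2 * c\<^sup>2))
      = (\<sigma> 1 * c)\<^sup>2 * ((\<sigma> 0)\<^sup>2 * (norm (X $ 0))\<^sup>2) / ((\<sigma> 0)\<^sup>2 * P * ((\<sigma> 0)\<^sup>2 * (2 * P + 2 * c\<^sup>2)))"
    by (subst mult_divide_mult_cancel_left[of "(\<sigma> 0)\<^sup>2", symmetric]) (use s0 in \<open>simp_all add: ac_simps\<close>)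
  also have "\<dots> \<le> gram_det U V / (vec_sq_norm U * vec_sq_norm V)"
    using lower lower_pos upper \<open>0 < vec_sq_norm U\<close> \<open>0 < vec_sq_norm V\<close>
    by (intro frac_le) auto
  finally have "sqrt ((\<sigma> 1 * c)\<^sup>2 * (norm (X $ 0))\<^sup>2 / ((\<sigma> 0)\<^sup>2 * P * (2 * P + 2 * c\<^sup>2))) \<le> dP U V"
    unfolding dP_eq_gram_det[OF Uc Vc UV0] by (rule real_sqrt_le_mono)
  then show ?thesis by (simp add: U_def V_def P_def)
qed

lemma sqrt_ratio_le_of_sq_le:
  fixes s0 s1 \<delta> r P A :: real
  assumes "0 < s0" "0 < s1" "0 < r" "0 < P" "0 \<le> A"
    and "(s1 * \<delta>)\<^sup>2 * A \<le> (4 * r * s0)\<^sup>2 * P"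
  shows "\<delta> / (4 * r) * sqrt (A / P) \<le> s0 / s1"
proof (rule power2_le_imp_le)
  have "(\<delta> / (4 * r) * sqrt (A / P))\<^sup>2 = (s1 * \<delta>)\<^sup>2 * A / ((4 * r * s0)\<^sup>2 * P) * (s0 / s1)\<^sup>2"
    using assms by (simp add: power_mult_distrib power_divide field_simps)
  also have "\<dots> \<le> (s0 / s1)\<^sup>2"
    by (rule mult_left_le_one_le) (use assms in \<open>simp_all add: divide_le_eq_1\<close>)
  finally show "(\<delta> / (4 * r) * sqrt (A / P))\<^sup>2 \<le> (s0 / s1)\<^sup>2" .
  show "0 \<le> s0 / s1" using assms by simp
qed

lemma sqrt_ratio_le_of_perturbation_bound:
  fixes s0 s1 \<delta> r P A :: real
  assumes s: "0 < s0" "0 < s1" and \<delta>: "0 < \<delta>" "\<delta> < 1" and r: "0 < r" and P: "0 < P" and A: "0 \<le> A"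
  defines "c \<equiv> \<delta> / 2 * sqrt P"
  assumes "sqrt ((s1 * c)\<^sup>2 * A / (s0\<^sup>2 * P * (2 * P + 2 * c\<^sup>2))) < r"
  shows "\<delta> / (4 * r) * sqrt (A / P) \<le> s0 / s1"
proof -
  have c2: "c\<^sup>2 = \<delta>\<^sup>2 / 4 * P" using P by (simp add: c_def power_mult_distrib power_divide)
  have num: "(s1 * c)\<^sup>2 = (s1 * \<delta>)\<^sup>2 * P / 4"
    and den: "2 * P + 2 * c\<^sup>2 = P * (8 + 2 * \<delta>\<^sup>2) / 4"
    by (simp_all add: power_mult_distrib c2 field_simps)
  have "(s1 * c)\<^sup>2 * A / (s0\<^sup>2 * P * (2 * P + 2 * c\<^sup>2)) < r\<^sup>2"
    using assms(9) r by (metis real_sqrt_less_iff real_sqrt_abs abs_of_pos)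
  moreover have "0 < s0\<^sup>2 * P * (2 * P + 2 * c\<^sup>2)" using s P by (intro mult_pos_pos add_pos_nonneg) auto
  ultimately have "(s1 * c)\<^sup>2 * A < r\<^sup>2 * (s0\<^sup>2 * P * (2 * P + 2 * c\<^sup>2))"
    by (simp add: divide_less_eq)
  then have "(s1 * \<delta>)\<^sup>2 * P / 4 * A < r\<^sup>2 * (s0\<^sup>2 * P * (P * (8 + 2 * \<delta>\<^sup>2) / 4))"
    unfolding num den .
  then have "P / 4 * ((s1 * \<delta>)\<^sup>2 * A) < P / 4 * (r\<^sup>2 * (s0\<^sup>2 * P * (8 + 2 * \<delta>\<^sup>2)))"
    by (simp add: field_simps)
  then have "(s1 * \<delta>)\<^sup>2 * A < r\<^sup>2 * (s0\<^sup>2 * P * (8 + 2 * \<delta>\<^sup>2))"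
    using P by simp
  also have "\<dots> \<le> r\<^sup>2 * (s0\<^sup>2 * P * 16)"
    using P \<delta> power_le_one[of \<delta> 2] by (intro mult_left_mono) auto
  also have "\<dots> = (4 * r * s0)\<^sup>2 * P" by (simp add: power_mult_distrib mult_ac)
  finally show ?thesis using sqrt_ratio_le_of_sq_le[OF s r P A] by simp
qed

lemma singular_value_ratio_ge_diag:
  fixes X :: "'a::normed_conjugatable_field vec"
  assumes d: "2 \<le> d" and X: "X \<in> carrier_vec d" "X \<noteq> 0\<^sub>v d"
    and pos: "\<forall>i<d. 0 < \<sigma> i" and mono: "\<forall>i j. i \<le> j \<longrightarrow> j < d \<longrightarrow> \<sigma> j \<le> \<sigma> i"
    and \<delta>: "0 < \<delta>" "\<delta> < 1" and r: "0 < r"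
    and contracts: "\<And>Y. Y \<in> proj_reps d \<Longrightarrow> dP X Y < \<delta> \<Longrightarrow>
      dP (diag_real d \<sigma> *\<^sub>v X) (diag_real d \<sigma> *\<^sub>v Y) < r"
  shows "\<delta> / (4 * r) * sqrt ((norm (X $ 0))\<^sup>2 / vec_sq_norm X) \<le> \<sigma> 0 / \<sigma> 1"
proof (cases "X $ 0 = 0")
  case True
  then show ?thesis using pos d by (simp add: less_imp_le)
next
  case False
  define c where "c = \<delta> / 2 * sqrt (vec_sq_norm X)"
  let ?Y = "X + of_real c \<cdot>\<^sub>v unit_vec d 1"
  have P: "0 < vec_sq_norm X" using vec_sq_norm_pos_iff[OF X(1)] X(2) by simp
  have s: "0 < \<sigma> 0" "0 < \<sigma> 1" using pos d by auto
  have "?Y \<in> proj_reps d \<and> dP X ?Y < \<delta>"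
    using dP_perturbation_lt[OF X _ \<delta>, of 1] d by (simp add: c_def)
  then have "dP (diag_real d \<sigma> *\<^sub>v X) (diag_real d \<sigma> *\<^sub>v ?Y) < r"
    using contracts by blast
  moreover have "sqrt ((\<sigma> 1 * c)\<^sup>2 * (norm (X $ 0))\<^sup>2
      / ((\<sigma> 0)\<^sup>2 * vec_sq_norm X * (2 * vec_sq_norm X + 2 * c\<^sup>2)))
    \<le> dP (diag_real d \<sigma> *\<^sub>v X) (diag_real d \<sigma> *\<^sub>v ?Y)"
    using P \<delta> by (intro dP_diag_real_perturbation_ge[OF d X(1) False _ pos mono]) (simp add: c_def)
  ultimately show ?thesis
    using sqrt_ratio_le_of_perturbation_bound[OF s \<delta> r P] by (simp add: c_def)
qed

lemma exists_coordinate_hyperplane_point: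
  fixes X :: "'a::normed_conjugatable_field vec"
  assumes d: "2 \<le> d" and X: "X \<in> carrier_vec d" "X \<noteq> 0\<^sub>v d"
  obtains W :: "'a vec" where "W \<in> proj_reps d" "W $ 0 = 0" "dP X W \<le> sqrt ((norm (X $ 0))\<^sup>2 / vec_sq_norm X)"
proof -
  define W where "W = vec d (\<lambda>i. if i = 0 then 0 else X $ i)"
  have Wc: "W \<in> carrier_vec d" and W0: "W $ 0 = 0" using d by (simp_all add: W_def)
  have XW: "X = W + (X $ 0) \<cdot>\<^sub>v unit_vec d 0"
    using X d by (intro eq_vecI) (auto simp: W_def)
  show ?thesis
  proof (cases "W = 0\<^sub>v d")
    case True
    have "vec_sq_norm X = (norm (X $ 0))\<^sup>2"
      using d by (subst XW) (simp add: True vec_sq_norm_smult_unit_vec)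
    moreover have "0 < vec_sq_norm X" using vec_sq_norm_pos_iff[OF X(1)] X(2) by simp
    ultimately have one: "(norm (X $ 0))\<^sup>2 / vec_sq_norm X = 1" by simp
    have "dP X (unit_vec d 1) \<le> sqrt ((norm (X $ 0))\<^sup>2 / vec_sq_norm X)"
      by (simp only: one real_sqrt_one dP_le_1)
    then show ?thesis using d by (intro that[of "unit_vec d 1"]) (simp_all add: proj_reps_def)
  next
    case False
    have "gram_det X W = gram_det W (W + (X $ 0) \<cdot>\<^sub>v unit_vec d 0)"
      using X(1) Wc by (simp add: gram_det_sym[of X d W] flip: XW)
    also have "\<dots> = (norm (X $ 0))\<^sup>2 * vec_sq_norm W"
      using Wc W0 d by (simp add: gram_det_add gram_det_smult_unit_vec)
    finally have "dP X W = sqrt ((norm (X $ 0))\<^sup>2 / vec_sq_norm X)"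
      using vec_sq_norm_pos_iff[OF Wc] False by (simp add: dP_eq_gram_det[OF X(1) Wc X(2) False])
    then show ?thesis using that Wc W0 False by (simp add: proj_reps_def)
  qed
qed

lemma dist_to_set_le_dP:
  fixes x :: "'a::normed_conjugatable_field vec"
  assumes "x \<in> proj_reps d" "S \<subseteq> proj_reps d" "w \<in> S"
  shows "dist_to_set x S \<le> dP x w"
  unfolding dist_to_set_def
proof (rule cInf_lower)
  show "dP x w \<in> dP x ` S" using assms(3) by simp
  show "bdd_below (dP x ` S)"
    using assms(1,2) dP_nonneg by (intro bdd_belowI2[of _ 0]) (auto simp: proj_reps_def)
qed

lemma dist_to_hyperplane_reps_le:
  fixes k :: "'a::normed_conjugatable_field mat"
  assumes d: "2 \<le> d" and k: "unitary_mat d k" and x: "x \<in> proj_reps d"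
  shows "dist_to_set x (hyperplane_reps d k) \<le> sqrt ((norm ((k *\<^sub>v x) $ 0))\<^sup>2 / vec_sq_norm (k *\<^sub>v x))"
proof -
  have X: "k *\<^sub>v x \<in> carrier_vec d" "k *\<^sub>v x \<noteq> 0\<^sub>v d"
    using unitary_mat_proj_reps[OF k x] by (auto simp: proj_reps_def)
  obtain W :: "'a vec" where W: "W \<in> proj_reps d" "W $ 0 = 0"
    and dW: "dP (k *\<^sub>v x) W \<le> sqrt ((norm ((k *\<^sub>v x) $ 0))\<^sup>2 / vec_sq_norm (k *\<^sub>v x))"
    using exists_coordinate_hyperplane_point[OF d X] by blast
  obtain w where w: "w \<in> proj_reps d" "k *\<^sub>v w = W"
    using unitary_mat_surj_proj_reps[OF k W(1)] by blast
  have "w \<in> hyperplane_reps d k"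
    using w W d cscalar_prod_smult_unit_vec[of W d 0 1]
    by (simp add: hyperplane_reps_def proj_reps_def conjugate_one)
  then have "dist_to_set x (hyperplane_reps d k) \<le> dP x w"
    by (intro dist_to_set_le_dP[OF x]) (auto simp: hyperplane_reps_def)
  also have "dP x w = dP (k *\<^sub>v x) W"
    using unitary_mat_dP[OF k] x w by (auto simp: proj_reps_def)
  finally show ?thesis using dW by simp
qed

lemma diag_real_contracts_ball:
  fixes g k k' :: "'a::normed_conjugatable_field mat"
  assumes k: "unitary_mat d k" and k': "unitary_mat d k'" and g: "g = k * diag_real d \<sigma> * k'"
    and x: "x \<in> proj_reps d" and ball: "\<forall>y \<in> proj_ball d x \<delta>. dP (g *\<^sub>v x) (g *\<^sub>v y) < r"
    and Y: "Y \<in> proj_reps d" "dP (k' *\<^sub>v x) Y < \<delta>"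
  shows "dP (diag_real d \<sigma> *\<^sub>v (k' *\<^sub>v x)) (diag_real d \<sigma> *\<^sub>v Y) < r"
proof -
  have kc: "k \<in> carrier_mat d d" and k'c: "k' \<in> carrier_mat d d"
    using k k' by (simp_all add: unitary_mat_def)
  have g_apply: "g *\<^sub>v v = k *\<^sub>v (diag_real d \<sigma> *\<^sub>v (k' *\<^sub>v v))" if v: "v \<in> carrier_vec d" for v
  proof -
    have "g *\<^sub>v v = (k * diag_real d \<sigma>) *\<^sub>v (k' *\<^sub>v v)"
      unfolding g by (rule assoc_mult_mat_vec[of _ d d _ d])
        (use k'c v mult_carrier_mat[OF kc diag_real_carrier] in auto)
    also have "\<dots> = k *\<^sub>v (diag_real d \<sigma> *\<^sub>v (k' *\<^sub>v v))"
      by (rule assoc_mult_mat_vec[of _ d d _ d]) (use kc k'c v diag_real_carrier in auto)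
    finally show ?thesis .
  qed
  obtain y where y: "y \<in> proj_reps d" "k' *\<^sub>v y = Y"
    using unitary_mat_surj_proj_reps[OF k' Y(1)] by blast
  have "dP x y < \<delta>" using Y(2) y unitary_mat_dP[OF k'] x by (auto simp: proj_reps_def)
  then have "dP (g *\<^sub>v x) (g *\<^sub>v y) < r" using ball y by (simp add: proj_ball_def)
  moreover have "dP (g *\<^sub>v x) (g *\<^sub>v y) = dP (diag_real d \<sigma> *\<^sub>v (k' *\<^sub>v x)) (diag_real d \<sigma> *\<^sub>v Y)"
  proof -
    have xy: "x \<in> carrier_vec d" "y \<in> carrier_vec d" "Y \<in> carrier_vec d"
      using x y Y by (simp_all add: proj_reps_def)
    have "k' *\<^sub>v x \<in> carrier_vec d" using k'c xy(1) by (rule mult_mat_vec_carrier)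
    then show ?thesis
      using unitary_mat_dP[OF k mult_mat_vec_carrier[OF diag_real_carrier] mult_mat_vec_carrier[OF diag_real_carrier xy(3)]]
        xy y(2) by (simp add: g_apply)
  qed
  ultimately show ?thesis by simp
qed

theorem singular_value_ratio_ge:
  fixes g k k' :: "'a::normed_conjugatable_field mat"
  assumes d: "2 \<le> d" and k: "unitary_mat d k" and k': "unitary_mat d k'"
    and pos: "\<forall>i<d. 0 < \<sigma> i" and mono: "\<forall>i j. i \<le> j \<longrightarrow> j < d \<longrightarrow> \<sigma> j \<le> \<sigma> i"
    and g: "g = k * diag_real d \<sigma> * k'" and x: "x \<in> proj_reps d"
    and \<delta>: "0 < \<delta>" "\<delta> < 1" and r: "0 < r"
    and ball: "\<forall>y \<in> proj_ball d x \<delta>. dP (g *\<^sub>v x) (g *\<^sub>v y) < r"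
  shows "\<delta> / (4 * r) * dist_to_set x (hyperplane_reps d k') \<le> \<sigma> 0 / \<sigma> 1"
proof -
  have X: "k' *\<^sub>v x \<in> carrier_vec d" "k' *\<^sub>v x \<noteq> 0\<^sub>v d"
    using unitary_mat_proj_reps[OF k' x] by (auto simp: proj_reps_def)
  have "\<delta> / (4 * r) * dist_to_set x (hyperplane_reps d k')
      \<le> \<delta> / (4 * r) * sqrt ((norm ((k' *\<^sub>v x) $ 0))\<^sup>2 / vec_sq_norm (k' *\<^sub>v x))"
    using dist_to_hyperplane_reps_le[OF d k' x] \<delta> r by (intro mult_left_mono) auto
  moreover have "\<delta> / (4 * r) * sqrt ((norm ((k' *\<^sub>v x) $ 0))\<^sup>2 / vec_sq_norm (k' *\<^sub>v x)) \<le> \<sigma> 0 / \<sigma> 1"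
    using singular_value_ratio_ge_diag[OF d X pos mono \<delta> r]
      diag_real_contracts_ball[OF k k' g x ball] by blast
  ultimately show ?thesis by linarith
qed

theorem lemma2p2:
  shows
  "(\<forall>(d::nat) (g::real mat) (k::real mat) (k'::real mat) (\<sigma>::nat \<Rightarrow> real) (x::real vec) (\<delta>::real) (r::real).
      2 \<le> d \<longrightarrow> g \<in> carrier_mat d d \<longrightarrow>
      unitary_mat d k \<longrightarrow> unitary_mat d k' \<longrightarrow>
      (\<forall>i<d. 0 < \<sigma> i) \<longrightarrow> (\<forall>i j. i \<le> j \<longrightarrow> j < d \<longrightarrow> \<sigma> j \<le> \<sigma> i) \<longrightarrow>
      g = k * diag_real d \<sigma> * k' \<longrightarrow>
      x \<in> proj_reps d \<longrightarrow> 0 < \<delta> \<longrightarrow> \<delta> < 1 \<longrightarrow> 0 < r \<longrightarrow> r < 1 \<longrightarrow>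
      (\<forall>y \<in> proj_ball d x \<delta>. dP (g *\<^sub>v x) (g *\<^sub>v y) < r) \<longrightarrow>
      \<sigma> 0 / \<sigma> 1 \<ge> \<delta> / (4 * r) * dist_to_set x (hyperplane_reps d k'))
   \<and>
   (\<forall>(d::nat) (g::complex mat) (k::complex mat) (k'::complex mat) (\<sigma>::nat \<Rightarrow> real) (x::complex vec) (\<delta>::real) (r::real).
      2 \<le> d \<longrightarrow> g \<in> carrier_mat d d \<longrightarrow>
      unitary_mat d k \<longrightarrow> unitary_mat d k' \<longrightarrow>
      (\<forall>i<d. 0 < \<sigma> i) \<longrightarrow> (\<forall>i j. i \<le> j \<longrightarrow> j < d \<longrightarrow> \<sigma> j \<le> \<sigma> i) \<longrightarrow>
      g = k * diag_real d \<sigma> * k' \<longrightarrow>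
      x \<in> proj_reps d \<longrightarrow> 0 < \<delta> \<longrightarrow> \<delta> < 1 \<longrightarrow> 0 < r \<longrightarrow> r < 1 \<longrightarrow>
      (\<forall>y \<in> proj_ball d x \<delta>. dP (g *\<^sub>v x) (g *\<^sub>v y) < r) \<longrightarrow>
      \<sigma> 0 / \<sigma> 1 \<ge> \<delta> / (4 * r) * dist_to_set x (hyperplane_reps d k'))"
  by (intro conjI allI impI) (rule singular_value_ratio_ge; assumption)+

end
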